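(* Let $G$ be a graph of arbitrary (finite or infinite) order without pendant edges. Then for every assignment of lists of size $4$ to the edges of $G$, $G$ admits a majority edge-coloring from these lists.
   Context: A pendant edge is an edge incident to a vertex of degree $1$. An edge-coloring from lists $L(e)$ is a map $c$ with $c(e)\in L(e)$ for all edges $e$. It is a majority edge-coloring if for every vertex $v$ and every color $\alpha$, the cardinality of the set of edges incident to $v$ colored $\alpha$ is at most the cardinality of the set of edges incident to $v$ not colored $\alpha$. *)

theory Defs
  imports Main "HOL-Library.Equipollence"
begin

definition graph :: "'a set \<Rightarrow> 'a set set \<Rightarrow> bool" where
  "graph V E \<longleftrightarrow> (\<forall>e\<in>E. \<exists>u v. e = {u, v} \<and> u \<noteq> v \<and> u \<in> V \<and> v \<in> V)"

definition incident_edges :: "'a set set \<Rightarrow> 'a \<Rightarrow> 'a set set" where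
  "incident_edges E v = {e \<in> E. v \<in> e}"

definition degree_one :: "'a set set \<Rightarrow> 'a \<Rightarrow> bool" where
  "degree_one E v \<longleftrightarrow> (\<exists>!e. e \<in> incident_edges E v)"

definition pendant_edge :: "'a set set \<Rightarrow> 'a set \<Rightarrow> bool" where
  "pendant_edge E e \<longleftrightarrow> e \<in> E \<and> (\<exists>v\<in>e. degree_one E v)"

definition list_coloring :: "'a set set \<Rightarrow> ('a set \<Rightarrow> 'c set) \<Rightarrow> ('a set \<Rightarrow> 'c) \<Rightarrow> bool" where
  "list_coloring E L c \<longleftrightarrow> (\<forall>e\<in>E. c e \<in> L e)"

definition majority_coloring :: "'a set \<Rightarrow> 'a set set \<Rightarrow> ('a set \<Rightarrow> 'c) \<Rightarrow> bool" where
  "majority_coloring V E c \<longleftrightarrow>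
     (\<forall>v\<in>V. \<forall>\<alpha>. {e \<in> incident_edges E v. c e = \<alpha>} \<lesssim> {e \<in> incident_edges E v. c e \<noteq> \<alpha>})"

end

(*
  Since no vertex has degree 1, the edges at each vertex can be partitioned into blocks of two
  or three edges: a maximal family of disjoint pairs (Zorn's lemma) leaves at most one edge over,
  which joins one of the pairs. Splitting every vertex into one copy per block gives a graph of
  maximum degree 3 with the same edges. A proper colouring of its edges from the lists is
  injective on every block, and then sending each edge to another edge of its block maps every
  colour class at a vertex injectively into its complement.

  Graphs of maximum degree 3 have proper edge colourings from lists of size 4. For finite graphs
  this goes by induction, removing a configuration at the end v of a longest path: the first edge
  of the path if v has degree at most 2 (it meets at most 3 other edges); otherwise all three
  neighbours of v lie on the path, and the cycle closed by the nearer chord together with the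
  farther chord can be coloured greedily after the rest. Infinite graphs follow by compactness.
*)

theory Submission
  imports Defs "HOL-Library.Disjoint_Sets"
begin

section \<open>List colourings\<close>

definition proper_list_coloring ::
    "'x set \<Rightarrow> ('x \<Rightarrow> 'x \<Rightarrow> bool) \<Rightarrow> ('x \<Rightarrow> 'c set) \<Rightarrow> ('x \<Rightarrow> 'c) \<Rightarrow> bool" where
  "proper_list_coloring S R L c \<longleftrightarrow>
     (\<forall>x\<in>S. c x \<in> L x) \<and> (\<forall>x\<in>S. \<forall>y\<in>S. R x y \<longrightarrow> c x \<noteq> c y)"

lemma proper_list_coloring_subset:
  "proper_list_coloring S R L c \<Longrightarrow> T \<subseteq> S \<Longrightarrow> proper_list_coloring T R L c"
  unfolding proper_list_coloring_def by blast

lemma proper_list_coloring_patch: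
  assumes "symp R"
    and c0: "proper_list_coloring (S - X) R L c0" and c1: "proper_list_coloring X R A c1"
    and A: "\<And>x. x \<in> X \<Longrightarrow> A x \<subseteq> L x - c0 ` {y \<in> S - X. R x y}"
  shows "proper_list_coloring S R L (\<lambda>x. if x \<in> X then c1 x else c0 x)"
  unfolding proper_list_coloring_def
proof (intro conjI ballI impI)
  fix x assume "x \<in> S"
  show "(if x \<in> X then c1 x else c0 x) \<in> L x"
  proof (cases "x \<in> X")
    case True
    then have "c1 x \<in> A x" using c1 unfolding proper_list_coloring_def by blast
    then show ?thesis using A[OF True] True by auto
  next
    case False
    then show ?thesis using c0 \<open>x \<in> S\<close> unfolding proper_list_coloring_def by auto
  qed
next
  have cross: "c1 x \<noteq> c0 y" if "x \<in> X" "y \<in> S - X" "R x y" for x y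
  proof -
    have "c1 x \<in> A x" using c1 \<open>x \<in> X\<close> unfolding proper_list_coloring_def by blast
    then have "c1 x \<notin> c0 ` {y \<in> S - X. R x y}" using A[OF \<open>x \<in> X\<close>] by blast
    then show ?thesis using that by blast
  qed
  fix x y assume "x \<in> S" "y \<in> S" "R x y"
  then show "(if x \<in> X then c1 x else c0 x) \<noteq> (if y \<in> X then c1 y else c0 y)"
    using c0 c1 cross[of x y] cross[of y x] sympD[OF \<open>symp R\<close> \<open>R x y\<close>]
    unfolding proper_list_coloring_def by (cases "x \<in> X"; cases "y \<in> X") auto
qed

lemma proper_list_coloring_insert:
  assumes "symp R" "\<not> R x x"
    and c: "proper_list_coloring S R L c" and "a \<in> L x" and a: "a \<notin> c ` {y \<in> S. R x y}"
  shows "proper_list_coloring (insert x S) R L (c(x := a))"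
  unfolding proper_list_coloring_def
proof (intro conjI ballI impI)
  fix y assume "y \<in> insert x S"
  then show "(c(x := a)) y \<in> L y" using c \<open>a \<in> L x\<close> unfolding proper_list_coloring_def by auto
next
  have new: "a \<noteq> c y" if "y \<in> S" "R x y" for y using a that by blast
  fix y z assume "y \<in> insert x S" "z \<in> insert x S" "R y z"
  then show "(c(x := a)) y \<noteq> (c(x := a)) z"
    using c \<open>\<not> R x x\<close> new[of z] new[of y] sympD[OF \<open>symp R\<close> \<open>R y z\<close>]
    unfolding proper_list_coloring_def by (cases "y = x"; cases "z = x") auto
qed

lemma proper_list_coloring_greedy:
  fixes n :: nat
  assumes "symp R" "\<And>x. \<not> R x x"
    and "\<And>k. k < n \<Longrightarrow> finite (A (f k)) \<and>
           card {l. l < k \<and> R (f l) (f k) \<and> A (f l) \<inter> A (f k) \<noteq> {}} < card (A (f k))"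
  shows "\<exists>c. proper_list_coloring (f ` {..<n}) R A c"
  using assms(3)
proof (induction n)
  case 0
  show ?case by (simp add: proper_list_coloring_def)
next
  case (Suc n)
  then obtain c where c: "proper_list_coloring (f ` {..<n}) R A c" by auto
  define x where "x = f n"
  define N where "N = {l. l < n \<and> R (f l) x \<and> A (f l) \<inter> A x \<noteq> {}}"
  have fin: "finite (A x)" and small: "card N < card (A x)"
    using Suc.prems[of n] unfolding x_def N_def by auto
  have N_fin: "finite N" unfolding N_def by simp
  have forbidden: "A x \<inter> c ` {y \<in> f ` {..<n}. R x y} \<subseteq> c ` f ` N"
  proof
    fix z assume "z \<in> A x \<inter> c ` {y \<in> f ` {..<n}. R x y}"
    then obtain l where l: "l < n" "R x (f l)" "z = c (f l)" "z \<in> A x" by blast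
    then have "c (f l) \<in> A (f l)" using c unfolding proper_list_coloring_def by blast
    then have "l \<in> N" using l sympD[OF \<open>symp R\<close> l(2)] unfolding N_def by auto
    then show "z \<in> c ` f ` N" using l by blast
  qed
  have "\<not> A x \<subseteq> c ` {y \<in> f ` {..<n}. R x y}"
  proof
    assume "A x \<subseteq> c ` {y \<in> f ` {..<n}. R x y}"
    then have "A x \<subseteq> c ` f ` N" using forbidden by (simp add: inf.absorb1)
    then have "card (A x) \<le> card (c ` f ` N)" using N_fin by (intro card_mono) auto
    also have "\<dots> \<le> card (f ` N)" using N_fin by (intro card_image_le) auto
    also have "\<dots> \<le> card N" using N_fin by (rule card_image_le)
    finally show False using small by linarith
  qed
  then obtain a where "a \<in> A x" "a \<notin> c ` {y \<in> f ` {..<n}. R x y}" by blast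
  then have "proper_list_coloring (insert x (f ` {..<n})) R A (c(x := a))"
    using proper_list_coloring_insert[OF assms(1,2) c] by blast
  then show ?case unfolding x_def lessThan_Suc image_insert by blast
qed

definition extendable_precoloring ::
    "'x set \<Rightarrow> ('x \<Rightarrow> 'x \<Rightarrow> bool) \<Rightarrow> ('x \<Rightarrow> 'c set) \<Rightarrow> ('x \<times> 'c) set \<Rightarrow> bool" where
  "extendable_precoloring S R L p \<longleftrightarrow> p \<subseteq> S \<times> UNIV \<and> single_valued p \<and>
     (\<forall>F. finite F \<longrightarrow> F \<subseteq> S \<longrightarrow>
        (\<exists>c. proper_list_coloring F R L c \<and> (\<forall>(x, a) \<in> p. x \<in> F \<longrightarrow> c x = a)))"

lemma extendable_precoloringD:
  assumes "extendable_precoloring S R L p" "finite F" "F \<subseteq> S"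
  obtains c where "proper_list_coloring F R L c" "\<And>x a. (x, a) \<in> p \<Longrightarrow> x \<in> F \<Longrightarrow> c x = a"
proof -
  have "\<exists>c. proper_list_coloring F R L c \<and> (\<forall>(x, a) \<in> p. x \<in> F \<longrightarrow> c x = a)"
    using assms unfolding extendable_precoloring_def by simp
  then obtain c where c: "proper_list_coloring F R L c" and c_p: "\<forall>(x, a) \<in> p. x \<in> F \<longrightarrow> c x = a"
    by blast
  show thesis by (rule that[OF c]) (use c_p in auto)
qed

lemma extendable_precoloring_chain_Union:
  assumes chain: "subset.chain {p. extendable_precoloring S R L p} C"
    and finite_colorable: "\<And>F. finite F \<Longrightarrow> F \<subseteq> S \<Longrightarrow> \<exists>c. proper_list_coloring F R L c"
  shows "extendable_precoloring S R L (\<Union>C)"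
proof -
  have ext: "\<And>p. p \<in> C \<Longrightarrow> extendable_precoloring S R L p"
    and total: "\<And>p q. p \<in> C \<Longrightarrow> q \<in> C \<Longrightarrow> p \<subseteq> q \<or> q \<subseteq> p"
    using chain unfolding subset_chain_def by auto
  have "\<Union>C \<subseteq> S \<times> UNIV" using ext unfolding extendable_precoloring_def by blast
  moreover have sv: "single_valued (\<Union>C)"
    unfolding single_valued_def
  proof (intro allI impI)
    fix x a b assume "(x, a) \<in> \<Union>C" "(x, b) \<in> \<Union>C"
    then obtain p q where "p \<in> C" "q \<in> C" "(x, a) \<in> p" "(x, b) \<in> q" by blast
    moreover have "single_valued p" "single_valued q"
      using ext \<open>p \<in> C\<close> \<open>q \<in> C\<close> unfolding extendable_precoloring_def by blast+
    ultimately show "a = b" using total[of p q] unfolding single_valued_def by blast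
  qed
  moreover have "\<exists>c. proper_list_coloring F R L c \<and> (\<forall>(x, a) \<in> \<Union>C. x \<in> F \<longrightarrow> c x = a)"
    if F: "finite F" "F \<subseteq> S" for F
  proof (cases "C = {}")
    case True
    then show ?thesis using finite_colorable[OF F] by auto
  next
    case False
    define Q where "Q = {xa \<in> \<Union>C. fst xa \<in> F}"
    have "inj_on fst Q" using sv unfolding Q_def inj_on_def single_valued_def by auto
    moreover have "finite (fst ` Q)" using F(1) by (rule finite_subset[rotated]) (auto simp: Q_def)
    ultimately have "finite Q" by (rule finite_imageD[rotated])
    then obtain p where "p \<in> C" "Q \<subseteq> p"
      using finite_subset_Union_chain[OF _ _ False chain] unfolding Q_def by blast
    then obtain c where c: "proper_list_coloring F R L c"
      and c_p: "\<And>x a. (x, a) \<in> p \<Longrightarrow> x \<in> F \<Longrightarrow> c x = a"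
      using extendable_precoloringD[OF ext F] by blast
    have "\<forall>(x, a) \<in> \<Union>C. x \<in> F \<longrightarrow> c x = a"
      using c_p \<open>Q \<subseteq> p\<close> unfolding Q_def by auto
    with c show ?thesis by (intro exI[of _ c]) simp
  qed
  ultimately show ?thesis unfolding extendable_precoloring_def by (intro conjI allI impI) simp_all
qed

lemma maximal_extendable_precoloring_total:
  assumes M: "extendable_precoloring S R L M"
    and M_max: "\<And>p. extendable_precoloring S R L p \<Longrightarrow> M \<subseteq> p \<Longrightarrow> p = M"
    and fin: "finite (L x)" and "x \<in> S"
  shows "\<exists>a. (x, a) \<in> M"
proof (rule ccontr)
  assume undef: "\<nexists>a. (x, a) \<in> M"
  have "\<not> extendable_precoloring S R L (insert (x, a) M)" for a
    using M_max[of "insert (x, a) M"] undef by blast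
  moreover have "insert (x, a) M \<subseteq> S \<times> UNIV" "single_valued (insert (x, a) M)" for a
    using M \<open>x \<in> S\<close> undef unfolding extendable_precoloring_def single_valued_def by auto
  ultimately have "\<forall>a. \<exists>F. finite F \<and> F \<subseteq> S \<and> \<not> (\<exists>c. proper_list_coloring F R L c \<and>
      (\<forall>(y, b) \<in> insert (x, a) M. y \<in> F \<longrightarrow> c y = b))"
    unfolding extendable_precoloring_def by simp
  from choice[OF this] obtain F where F: "\<forall>a. finite (F a) \<and> F a \<subseteq> S \<and>
      \<not> (\<exists>c. proper_list_coloring (F a) R L c \<and> (\<forall>(y, b) \<in> insert (x, a) M. y \<in> F a \<longrightarrow> c y = b))"
    ..
  define K where "K = insert x (\<Union>a \<in> L x. F a)"
  have "finite K" "K \<subseteq> S" unfolding K_def using F fin \<open>x \<in> S\<close> by auto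
  then obtain c where c: "proper_list_coloring K R L c"
    and c_M: "\<And>y b. (y, b) \<in> M \<Longrightarrow> y \<in> K \<Longrightarrow> c y = b"
    using extendable_precoloringD[OF M] by blast
  have "c x \<in> L x" using c unfolding proper_list_coloring_def K_def by blast
  then have "F (c x) \<subseteq> K" unfolding K_def by blast
  then have "proper_list_coloring (F (c x)) R L c" by (rule proper_list_coloring_subset[OF c])
  moreover have "\<forall>(y, b) \<in> insert (x, c x) M. y \<in> F (c x) \<longrightarrow> c y = b"
    using c_M \<open>F (c x) \<subseteq> K\<close> by auto
  ultimately show False using F by blast
qed

lemma proper_list_coloring_compactness:
  assumes fin: "\<And>x. x \<in> S \<Longrightarrow> finite (L x)"
    and finite_colorable: "\<And>F. finite F \<Longrightarrow> F \<subseteq> S \<Longrightarrow> \<exists>c. proper_list_coloring F R L c"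
  shows "\<exists>c. proper_list_coloring S R L c"
proof -
  have "\<exists>M \<in> {p. extendable_precoloring S R L p}.
      \<forall>p \<in> {p. extendable_precoloring S R L p}. M \<subseteq> p \<longrightarrow> p = M"
    by (rule subset_Zorn') (simp add: extendable_precoloring_chain_Union finite_colorable)
  then obtain M where M: "extendable_precoloring S R L M"
    and M_max: "\<And>p. extendable_precoloring S R L p \<Longrightarrow> M \<subseteq> p \<Longrightarrow> p = M"
    by blast
  define c where "c x = (SOME a. (x, a) \<in> M)" for x
  have c_M: "(x, c x) \<in> M" if "x \<in> S" for x
    unfolding c_def using maximal_extendable_precoloring_total[OF M M_max fin[OF that] that]
    by (rule someI_ex)
  have agree: "\<exists>g. proper_list_coloring F R L g \<and> (\<forall>x\<in>F. g x = c x)"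
    if F: "finite F" "F \<subseteq> S" for F
  proof -
    obtain g where "proper_list_coloring F R L g" "\<And>x a. (x, a) \<in> M \<Longrightarrow> x \<in> F \<Longrightarrow> g x = a"
      using extendable_precoloringD[OF M F] by blast
    moreover have "(x, c x) \<in> M" if "x \<in> F" for x using c_M that F by blast
    ultimately show ?thesis by blast
  qed
  show ?thesis
    unfolding proper_list_coloring_def
  proof (intro exI[of _ c] conjI ballI impI)
    fix x assume "x \<in> S"
    then obtain g where "proper_list_coloring {x} R L g" "g x = c x" using agree[of "{x}"] by auto
    then show "c x \<in> L x" unfolding proper_list_coloring_def by auto
  next
    fix x y assume "x \<in> S" "y \<in> S" "R x y"
    then obtain g where "proper_list_coloring {x, y} R L g" "g x = c x" "g y = c y"
      using agree[of "{x, y}"] by auto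
    then show "c x \<noteq> c y" using \<open>R x y\<close> unfolding proper_list_coloring_def by auto
  qed
qed

lemma proper_list_coloring_sublists:
  "proper_list_coloring S R A' c \<Longrightarrow> (\<And>x. x \<in> S \<Longrightarrow> A' x \<subseteq> A x) \<Longrightarrow> proper_list_coloring S R A c"
  unfolding proper_list_coloring_def by blast

lemma restrict_list_disjoint_or_card_le:
  assumes "A x \<noteq> {}" "finite (A y)"
  obtains A' where "A' x \<subseteq> A x" "A' x \<noteq> {}" "\<And>z. z \<noteq> x \<Longrightarrow> A' z = A z"
    "A' x \<inter> A y = {} \<or> card (A x) \<le> card (A y)"
proof (cases "A x \<subseteq> A y")
  case True
  then show ?thesis using that[of A] assms by (simp add: card_mono)
next
  case False
  then obtain \<gamma> where "\<gamma> \<in> A x" "\<gamma> \<notin> A y" by blast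
  then show ?thesis using that[of "A(x := {\<gamma>})"] by auto
qed

(* The admissible conflicts form the cycle f 0, f 2, f 3, ..., f (i + 1), f 0 and the item f 1
   adjacent to f 0 and f 2. *)
lemma theta_list_coloring:
  fixes f :: "nat \<Rightarrow> 'x" and i :: nat
  assumes R: "symp R" "\<And>x. \<not> R x x" and "2 \<le> i" and inj: "inj_on f {..<i + 2}"
    and conflicts: "\<And>l k. l < k \<Longrightarrow> k < i + 2 \<Longrightarrow> R (f l) (f k) \<Longrightarrow>
      (l = 0 \<and> (k = 1 \<or> k = 2 \<or> k = i + 1)) \<or> (l = 1 \<and> k = 2) \<or> (2 \<le> l \<and> k = l + 1)"
    and fin: "\<And>k. k < i + 2 \<Longrightarrow> finite (A (f k))"
    and two: "\<And>k. k < i + 2 \<Longrightarrow> 2 \<le> card (A (f k))"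
    and three: "3 \<le> card (A (f 0))" "3 \<le> card (A (f 2))"
  shows "\<exists>c. proper_list_coloring (f ` {..<i + 2}) R A c"
proof -
  have f_ne: "f k \<noteq> f 0" if "0 < k" "k < i + 2" for k
    using inj_onD[OF inj, of k 0] that by auto
  (* Either f 0 keeps only colours that f (i + 1) cannot take, or f (i + 1) has at least three
     colours; either way f (i + 1), coloured last, still finds a free colour. *)
  have "A (f 0) \<noteq> {}" "finite (A (f (i + 1)))" using three(1) fin[of "i + 1"] by auto
  then obtain A' where A'_first: "A' (f 0) \<subseteq> A (f 0)" "A' (f 0) \<noteq> {}"
    and A'_other: "\<And>z. z \<noteq> f 0 \<Longrightarrow> A' z = A z"
    and spare: "A' (f 0) \<inter> A (f (i + 1)) = {} \<or> card (A (f 0)) \<le> card (A (f (i + 1)))"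
    using restrict_list_disjoint_or_card_le[of A "f 0" "f (i + 1)"] by blast
  have "\<exists>c. proper_list_coloring (f ` {..<i + 2}) R A' c"
  proof (rule proper_list_coloring_greedy[OF R])
    fix k assume k: "k < i + 2"
    define C where "C = {l. l < k \<and> R (f l) (f k) \<and> A' (f l) \<inter> A' (f k) \<noteq> {}}"
    have A'_k: "A' (f k) = A (f k)" if "0 < k" using A'_other f_ne that k by blast
    have "finite (A' (f k))"
      using fin[OF k] A'_first A'_k finite_subset fin[of 0] by (cases "k = 0") auto
    moreover have "card C < card (A' (f k))"
    proof -
      consider "k = 0" | "k = 1" | "k = 2" | "3 \<le> k" "k \<le> i" | "k = i + 1" "3 \<le> k"
        using k \<open>2 \<le> i\<close> by linarith
      then show ?thesis
      proof cases
        case 1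
        then have "C = {}" unfolding C_def by simp
        then show ?thesis using A'_first fin[of 0] 1 by (simp add: card_gt_0_iff finite_subset)
      next
        case 2
        then have "C \<subseteq> {0}" unfolding C_def by auto
        then show ?thesis using card_mono[of "{0}" C] two[OF k] A'_k 2 by force
      next
        case 3
        then have "C \<subseteq> {0, 1}" unfolding C_def by auto
        then show ?thesis using card_mono[of "{0, 1}" C] three(2) A'_k 3 by force
      next
        case 4
        then have "C \<subseteq> {k - 1}" using conflicts k unfolding C_def by fastforce
        then show ?thesis using card_mono[of "{k - 1}" C] two[OF k] A'_k 4 by force
      next
        case 5
        then have "C \<subseteq> {0, i}" using conflicts k unfolding C_def by fastforce
        moreover have "0 \<notin> C" if "card (A (f k)) < 3"
          using spare three(1) that 5 A'_k unfolding C_def by auto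
        ultimately show ?thesis
          using card_mono[of "{0, i}" C] card_mono[of "{i}" C] two[OF k] A'_k 5 by force
      qed
    qed
    ultimately show "finite (A' (f k)) \<and> card C < card (A' (f k))" by blast
  qed
  then obtain c where "proper_list_coloring (f ` {..<i + 2}) R A' c" by blast
  then have "proper_list_coloring (f ` {..<i + 2}) R A c"
    by (rule proper_list_coloring_sublists) (metis A'_first(1) A'_other order_refl)
  then show ?thesis by blast
qed

section \<open>Subcubic graphs are 4-edge-choosable\<close>

definition edge_adj :: "'a set \<Rightarrow> 'a set \<Rightarrow> bool" where
  "edge_adj e f \<longleftrightarrow> e \<noteq> f \<and> e \<inter> f \<noteq> {}"

definition subcubic :: "'a set set \<Rightarrow> bool" where
  "subcubic E \<longleftrightarrow> (\<forall>e\<in>E. card e = 2) \<and>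
     (\<forall>v. finite (incident_edges E v) \<and> card (incident_edges E v) \<le> 3)"

definition is_path :: "'a set set \<Rightarrow> 'a list \<Rightarrow> bool" where
  "is_path E ps \<longleftrightarrow> distinct ps \<and> (\<forall>k. Suc k < length ps \<longrightarrow> {ps ! k, ps ! Suc k} \<in> E)"

lemma symp_edge_adj: "symp edge_adj"
  unfolding edge_adj_def by (auto intro: sympI)

lemma not_edge_adj_self: "\<not> edge_adj e e"
  unfolding edge_adj_def by simp

lemma subcubic_subset:
  assumes "subcubic E" "F \<subseteq> E"
  shows "subcubic F"
proof -
  have "incident_edges F v \<subseteq> incident_edges E v" for v
    using assms(2) unfolding incident_edges_def by blast
  then show ?thesis using assms unfolding subcubic_def
    by (meson card_mono order_trans rev_finite_subset subsetD)
qed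

lemma card_diff_image_le: "finite B \<Longrightarrow> card A - card B \<le> card (A - c ` B)"
  using diff_card_le_card_Diff[of "c ` B" A] card_image_le[of B c] by simp

lemma card_incident_edges_diff:
  assumes "subcubic E" and "T \<subseteq> incident_edges E v \<inter> X"
  shows "card (incident_edges E v - X) + card T \<le> 3"
proof -
  have fin: "finite (incident_edges E v)" and deg: "card (incident_edges E v) \<le> 3"
    using assms(1) unfolding subcubic_def by auto
  have "card (incident_edges E v - X) \<le> card (incident_edges E v - T)"
    using assms(2) fin by (intro card_mono) auto
  also have "\<dots> = card (incident_edges E v) - card T"
    using assms(2) fin by (intro card_Diff_subset) (auto intro: finite_subset)
  moreover have "card T \<le> card (incident_edges E v)" using assms(2) fin by (intro card_mono) auto
  ultimately show ?thesis using deg by linarith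
qed

lemma finite_adjacent_edges:
  assumes "subcubic E" "finite e"
  shows "finite {f \<in> E. edge_adj e f}"
proof (rule finite_subset)
  show "{f \<in> E. edge_adj e f} \<subseteq> (\<Union>v\<in>e. incident_edges E v)"
    unfolding edge_adj_def incident_edges_def by blast
  show "finite (\<Union>v\<in>e. incident_edges E v)" using assms unfolding subcubic_def by blast
qed

lemma card_adjacent_edges_le:
  assumes "subcubic E"
  shows "card {f \<in> E - X. edge_adj {p, q} f}
    \<le> card (incident_edges E p - X) + card (incident_edges E q - X)"
proof -
  have "{f \<in> E - X. edge_adj {p, q} f} \<subseteq> (incident_edges E p - X) \<union> (incident_edges E q - X)"
    unfolding edge_adj_def incident_edges_def by auto
  moreover have "finite (incident_edges E p)" "finite (incident_edges E q)"
    using assms unfolding subcubic_def by auto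
  ultimately show ?thesis
    by (meson card_Un_le card_mono finite_Diff finite_UnI order_trans)
qed

lemma exists_maximal_path:
  assumes "finite E" "\<forall>e\<in>E. card e = 2" "e \<in> E"
  obtains ps where "is_path E ps" "2 \<le> length ps" "\<And>u. {ps ! 0, u} \<in> E \<Longrightarrow> u \<in> set ps"
proof -
  obtain a b where "e = {a, b}" "a \<noteq> b" using assms(2,3) card_2_iff by metis
  define P where "P ps \<longleftrightarrow> is_path E ps \<and> 2 \<le> length ps \<and> set ps \<subseteq> \<Union>E" for ps
  have "P [a, b]" using \<open>e = {a, b}\<close> \<open>a \<noteq> b\<close> assms(3) unfolding P_def is_path_def by auto
  have "finite (\<Union>E)" using assms(1,2) by (metis card.infinite finite_Union zero_neq_numeral)
  then have "length ps < Suc (card (\<Union>E))" if "P ps" for ps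
    using that distinct_card[of ps] card_mono[of "\<Union>E" "set ps"] unfolding P_def is_path_def by auto
  then obtain ps where "P ps" and longest: "\<And>qs. P qs \<Longrightarrow> length qs \<le> length ps"
    using ex_has_greatest_nat[of P "[a, b]" length] \<open>P [a, b]\<close> by metis
  have "u \<in> set ps" if "{ps ! 0, u} \<in> E" for u
  proof (rule ccontr)
    assume "u \<notin> set ps"
    have "is_path E (u # ps)"
      unfolding is_path_def
    proof (intro conjI allI impI)
      show "distinct (u # ps)" using \<open>u \<notin> set ps\<close> \<open>P ps\<close> unfolding P_def is_path_def by simp
      fix k assume "Suc k < length (u # ps)"
      then show "{(u # ps) ! k, (u # ps) ! Suc k} \<in> E"
        using \<open>P ps\<close> that unfolding P_def is_path_def by (cases k) (auto simp: insert_commute)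
    qed
    then have "P (u # ps)" using \<open>P ps\<close> that unfolding P_def by auto
    then show False using longest[of "u # ps"] by simp
  qed
  then show ?thesis using that \<open>P ps\<close> unfolding P_def by blast
qed

lemma list_edge_coloring_extend_low_degree:
  assumes sc: "subcubic E" and e: "{p, q} \<in> E" and deg: "card (incident_edges E p) \<le> 2"
    and L: "finite (L {p, q})" "4 \<le> card (L {p, q})"
    and c: "proper_list_coloring (E - {{p, q}}) edge_adj L c"
  shows "\<exists>c. proper_list_coloring E edge_adj L c"
proof -
  define N where "N = {f \<in> E - {{p, q}}. edge_adj {p, q} f}"
  have inc: "{p, q} \<in> incident_edges E v" "finite (incident_edges E v)"
    "card (incident_edges E v) \<le> 3" if "v \<in> {p, q}" for v
    using e that sc unfolding incident_edges_def subcubic_def by auto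
  have "card (incident_edges E p - {{p, q}}) \<le> 1" "card (incident_edges E q - {{p, q}}) \<le> 2"
    using inc[of p] inc[of q] deg by (simp_all add: card_Diff_singleton)
  then have "card N \<le> 3"
    using card_adjacent_edges_le[OF sc, of "{{p, q}}" p q] unfolding N_def by linarith
  moreover have "finite N"
    using finite_adjacent_edges[OF sc, of "{p, q}"] unfolding N_def
    by (simp add: Collect_mono_iff rev_finite_subset)
  ultimately have "card (L {p, q} - c ` N) \<noteq> 0"
    using card_diff_image_le[of N "L {p, q}" c] L by linarith
  then have "L {p, q} - c ` N \<noteq> {}" by force
  then obtain a where "a \<in> L {p, q}" "a \<notin> c ` N" by blast
  then have "proper_list_coloring (insert {p, q} (E - {{p, q}})) edge_adj L (c({p, q} := a))"
    using proper_list_coloring_insert[OF symp_edge_adj not_edge_adj_self c] unfolding N_def by blast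
  then have "proper_list_coloring E edge_adj L (c({p, q} := a))" by (simp add: insert_absorb e)
  then show ?thesis by blast
qed

lemma card_2_other_element:
  assumes "card f = 2" "v \<in> f"
  obtains x where "x \<noteq> v" "f = {v, x}"
proof -
  obtain a b where ab: "f = {a, b}" "a \<noteq> b" using assms(1) by (auto simp: card_2_iff)
  then consider "v = a" | "v = b" using assms(2) by blast
  then show thesis
  proof cases
    case 1
    then show thesis using that[of b] ab by simp
  next
    case 2
    then show thesis using that[of a] ab by (simp add: insert_commute)
  qed
qed

lemma end_degree_3_chords:
  assumes sc: "subcubic E" and ps: "is_path E ps" "2 \<le> length ps"
    and maximal: "\<And>u. {ps ! 0, u} \<in> E \<Longrightarrow> u \<in> set ps"
    and deg: "\<not> card (incident_edges E (ps ! 0)) \<le> 2"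
  obtains i j where "2 \<le> i" "i < j" "j < length ps" "{ps ! 0, ps ! i} \<in> E" "{ps ! 0, ps ! j} \<in> E"
    "incident_edges E (ps ! 0) \<subseteq> {{ps ! 0, ps ! 1}, {ps ! 0, ps ! i}, {ps ! 0, ps ! j}}"
proof -
  let ?p = "ps ! 0" and ?e = "{ps ! 0, ps ! 1}"
  have "?e \<in> incident_edges E ?p" using ps unfolding is_path_def incident_edges_def by auto
  moreover have "finite (incident_edges E ?p)" "card (incident_edges E ?p) \<le> 3"
    using sc unfolding subcubic_def by auto
  ultimately have "card (incident_edges E ?p - {?e}) = 2" using deg by (simp add: card_Diff_singleton)
  then obtain g h where gh: "incident_edges E ?p - {?e} = {g, h}" "g \<noteq> h" by (auto simp: card_2_iff)
  have chord: "\<exists>a. 2 \<le> a \<and> a < length ps \<and> f = {?p, ps ! a}" if f: "f \<in> incident_edges E ?p - {?e}" for f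
  proof -
    have "f \<in> E" "?p \<in> f" "f \<noteq> ?e" using f unfolding incident_edges_def by auto
    moreover obtain x where "x \<noteq> ?p" "f = {?p, x}"
      using card_2_other_element \<open>f \<in> E\<close> \<open>?p \<in> f\<close> sc unfolding subcubic_def by metis
    moreover obtain a where "a < length ps" "x = ps ! a"
      using maximal \<open>f \<in> E\<close> \<open>f = {?p, x}\<close> by (metis in_set_conv_nth)
    ultimately show ?thesis by (metis One_nat_def less_2_cases not_le)
  qed
  obtain a where a: "2 \<le> a" "a < length ps" "g = {?p, ps ! a}" using chord gh by blast
  obtain b where b: "2 \<le> b" "b < length ps" "h = {?p, ps ! b}" using chord gh by blast
  have "a \<noteq> b" using a b gh by auto
  moreover have "g \<in> E" "h \<in> E" "incident_edges E ?p \<subseteq> {?e, g, h}"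
    using gh unfolding incident_edges_def by auto
  ultimately show ?thesis using that[of a b] that[of b a] a b by (cases "a < b") (auto simp: insert_commute)
qed

lemma nat_cases_0_1_Suc_Suc:
  obtains "k = 0" | "k = 1" | m where "k = Suc (Suc m)"
  by (metis One_nat_def not0_implies_Suc)

(* The end ps ! 0 of the path has all its neighbours ps ! 1, ps ! i, ps ! j on it. theta is the
   cycle ps ! 0, ..., ps ! i, ps ! 0 plus the chord to ps ! j: edge 0 and edge 1 are the chords,
   edge (m + 2) is the path edge from ps ! m to ps ! (m + 1). *)
locale theta_in_subcubic =
  fixes E :: "'a set set" and ps :: "'a list" and i j :: nat
  assumes subcubic: "subcubic E" and path: "is_path E ps"
    and ij: "2 \<le> i" "i < j" "j < length ps"
    and chord_i: "{ps ! 0, ps ! i} \<in> E" and chord_j: "{ps ! 0, ps ! j} \<in> E"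
    and end_edges: "incident_edges E (ps ! 0) \<subseteq> {{ps ! 0, ps ! 1}, {ps ! 0, ps ! i}, {ps ! 0, ps ! j}}"
begin

definition index :: "nat \<Rightarrow> nat set" where
  "index k = (if k = 0 then {0, i} else if k = 1 then {0, j} else {k - 2, k - 1})"

definition edge :: "nat \<Rightarrow> 'a set" where
  "edge k = (!) ps ` index k"

definition theta :: "'a set set" where
  "theta = edge ` {..<i + 2}"

lemma index_less_length: "k < i + 2 \<Longrightarrow> index k \<subseteq> {..<length ps}"
  using ij unfolding index_def by auto

lemma edge_simps:
  "edge 0 = {ps ! 0, ps ! i}" "edge 1 = {ps ! 0, ps ! j}" "edge (Suc 0) = {ps ! 0, ps ! j}"
  "edge (Suc (Suc m)) = {ps ! m, ps ! Suc m}"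
  unfolding edge_def index_def by auto

lemma edge_in_E: "k < i + 2 \<Longrightarrow> edge k \<in> E"
  using chord_i chord_j path ij unfolding is_path_def
  by (cases k rule: nat_cases_0_1_Suc_Suc) (auto simp: edge_simps)

lemma inj_on_nth_ps: "inj_on ((!) ps) {..<length ps}"
  using path unfolding is_path_def by (intro inj_on_nth) auto

lemma edge_Int_iff:
  "l < i + 2 \<Longrightarrow> k < i + 2 \<Longrightarrow> edge l \<inter> edge k = {} \<longleftrightarrow> index l \<inter> index k = {}"
  unfolding edge_def using inj_on_image_Int[OF inj_on_nth_ps index_less_length index_less_length] by auto

lemma inj_on_edge: "inj_on edge {..<i + 2}"
proof (rule inj_onI)
  fix k l assume "k \<in> {..<i + 2}" "l \<in> {..<i + 2}" "edge k = edge l"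
  then have "index k = index l"
    using inj_on_image_eq_iff[OF inj_on_nth_ps index_less_length index_less_length]
    unfolding edge_def by auto
  then show "k = l" using ij unfolding index_def by (auto split: if_splits simp: doubleton_eq_iff)
qed

lemma edge_conflicts:
  assumes "l < k" "k < i + 2" "edge_adj (edge l) (edge k)"
  shows "(l = 0 \<and> (k = 1 \<or> k = 2 \<or> k = i + 1)) \<or> (l = 1 \<and> k = 2) \<or> (2 \<le> l \<and> k = l + 1)"
proof -
  have "index l \<inter> index k \<noteq> {}" using assms edge_Int_iff unfolding edge_adj_def by auto
  then show ?thesis using assms(1,2) ij unfolding index_def by (auto split: if_splits)
qed

lemma incident_edges_end_subset: "incident_edges E (ps ! 0) \<subseteq> theta"
proof -
  have "edge 0 \<in> theta" "edge 1 \<in> theta" "edge 2 \<in> theta" using ij unfolding theta_def by auto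
  then show ?thesis using end_edges edge_simps(1,2) edge_simps(4)[of 0] by (auto simp: numeral_2_eq_2)
qed

lemma card_incident_edges_inner_diff:
  assumes "1 \<le> v" "v \<le> i"
  shows "card (incident_edges E (ps ! v) - theta) \<le> 1"
proof -
  define k where "k = (if v < i then v + 2 else 0)"
  have "v + 1 < i + 2" "k < i + 2" "v + 1 \<noteq> k" using assms unfolding k_def by auto
  then have "edge (v + 1) \<noteq> edge k" using inj_onD[OF inj_on_edge] by blast
  moreover have "ps ! v \<in> edge (v + 1)" "ps ! v \<in> edge k"
    using assms edge_simps(4)[of "v - 1"] edge_simps(4)[of v] edge_simps(1)
    unfolding k_def by (auto simp: Suc_diff_le)
  moreover have "edge (v + 1) \<in> E \<inter> theta" "edge k \<in> E \<inter> theta"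
    using edge_in_E \<open>v + 1 < i + 2\<close> \<open>k < i + 2\<close> unfolding theta_def by auto
  ultimately have "card {edge (v + 1), edge k} = 2"
    and "{edge (v + 1), edge k} \<subseteq> incident_edges E (ps ! v) \<inter> theta"
    unfolding incident_edges_def by auto
  with card_incident_edges_diff[OF subcubic this(2)] show ?thesis by linarith
qed

lemma card_incident_edges_far_diff: "card (incident_edges E (ps ! j) - theta) \<le> 2"
proof -
  have "edge 1 \<in> theta" using ij unfolding theta_def by auto
  then have "{edge 1} \<subseteq> incident_edges E (ps ! j) \<inter> theta"
    using edge_in_E[of 1] ij unfolding incident_edges_def by (auto simp: edge_simps)
  with card_incident_edges_diff[OF subcubic this] show ?thesis by simp
qed

lemma card_adjacent_outside:
  assumes "k < i + 2"
  shows "card {f \<in> E - theta. edge_adj (edge k) f} \<le> (if k = 0 \<or> k = 2 then 1 else 2)"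
proof -
  have "incident_edges E (ps ! 0) - theta = {}" using incident_edges_end_subset by blast
  then have end_: "card (incident_edges E (ps ! 0) - theta) = 0" unfolding \<open>_ = {}\<close> by simp
  show ?thesis
  proof (cases k rule: nat_cases_0_1_Suc_Suc)
    case 1
    then show ?thesis using card_adjacent_edges_le[OF subcubic, of theta "ps ! 0" "ps ! i"]
        end_ card_incident_edges_inner_diff[of i] ij by (simp add: edge_simps)
  next
    case 2
    then show ?thesis using card_adjacent_edges_le[OF subcubic, of theta "ps ! 0" "ps ! j"]
        end_ card_incident_edges_far_diff by (simp add: edge_simps)
  next
    case (3 m)
    then have "m + 1 \<le> i" using assms by simp
    then have "card {f \<in> E - theta. edge_adj (edge k) f} \<le> (if m = 0 then 0 else 1) + 1"
      using card_adjacent_edges_le[OF subcubic, of theta "ps ! m" "ps ! Suc m"]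
        end_ card_incident_edges_inner_diff[of m] card_incident_edges_inner_diff[of "Suc m"] 3
      by (auto simp: edge_simps split: if_splits)
    then show ?thesis using 3 by (auto simp: numeral_2_eq_2)
  qed
qed

lemma list_edge_coloring_extend:
  assumes L: "\<And>e. e \<in> E \<Longrightarrow> finite (L e) \<and> 4 \<le> card (L e)"
    and c0: "proper_list_coloring (E - theta) edge_adj L c0"
  shows "\<exists>c. proper_list_coloring E edge_adj L c"
proof -
  define A where "A x = L x - c0 ` {f \<in> E - theta. edge_adj x f}" for x
  have A_card: "card (L (edge k)) - card {f \<in> E - theta. edge_adj (edge k) f} \<le> card (A (edge k))" for k
  proof -
    have "finite {f \<in> E. edge_adj (edge k) f}"
      by (rule finite_adjacent_edges[OF subcubic]) (simp add: edge_def index_def)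
    then have "finite {f \<in> E - theta. edge_adj (edge k) f}" by (rule rev_finite_subset) blast
    then show ?thesis unfolding A_def by (rule card_diff_image_le)
  qed
  have fin: "finite (A (edge k))" and big: "4 \<le> card (L (edge k))" if "k < i + 2" for k
    using L[OF edge_in_E[OF that]] unfolding A_def by auto
  have A_bound: "4 - (if k = 0 \<or> k = 2 then 1 else 2) \<le> card (A (edge k))" if "k < i + 2" for k
    using A_card[of k] big[OF that] card_adjacent_outside[OF that] by linarith
  have "\<exists>c1. proper_list_coloring (edge ` {..<i + 2}) edge_adj A c1"
  proof (rule theta_list_coloring[where R = edge_adj and f = edge and A = A, OF symp_edge_adj
        not_edge_adj_self ij(1) inj_on_edge edge_conflicts fin])
    show "2 \<le> card (A (edge k))" if "k < i + 2" for k
      using A_bound[OF that] by (simp split: if_splits)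
    show "3 \<le> card (A (edge 0))" "3 \<le> card (A (edge 2))"
      using A_bound[of 0] A_bound[of 2] ij by simp_all
  qed
  then obtain c1 where c1: "proper_list_coloring theta edge_adj A c1" unfolding theta_def ..
  have "proper_list_coloring E edge_adj L (\<lambda>x. if x \<in> theta then c1 x else c0 x)"
    by (rule proper_list_coloring_patch[OF symp_edge_adj c0 c1]) (simp add: A_def)
  then show ?thesis by blast
qed

end

theorem finite_subcubic_list_edge_coloring:
  assumes "finite E" "subcubic E" "\<And>e. e \<in> E \<Longrightarrow> finite (L e) \<and> 4 \<le> card (L e)"
  shows "\<exists>c. proper_list_coloring E edge_adj L c"
  using assms
proof (induction E rule: finite_psubset_induct)
  case (psubset E)
  note sc = \<open>subcubic E\<close> and L = psubset.prems(2)
  have IH: "\<exists>c. proper_list_coloring E' edge_adj L c" if "E' \<subset> E" for E'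
  proof (rule psubset.IH[OF that])
    show "subcubic E'" using subcubic_subset[OF sc] that by blast
    show "finite (L e) \<and> 4 \<le> card (L e)" if "e \<in> E'" for e using L \<open>E' \<subset> E\<close> that by blast
  qed
  show ?case
  proof (cases "E = {}")
    case True
    then show ?thesis unfolding proper_list_coloring_def by simp
  next
    case False
    then obtain e where "e \<in> E" by blast
    moreover have "\<forall>e\<in>E. card e = 2" using sc unfolding subcubic_def by blast
    ultimately obtain ps where ps: "is_path E ps" "2 \<le> length ps"
      and maximal: "\<And>u. {ps ! 0, u} \<in> E \<Longrightarrow> u \<in> set ps"
      using exists_maximal_path[OF psubset.hyps] by blast
    show ?thesis
    proof (cases "card (incident_edges E (ps ! 0)) \<le> 2")
      case True
      have e: "{ps ! 0, ps ! 1} \<in> E" using ps unfolding is_path_def by auto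
      then obtain c where "proper_list_coloring (E - {{ps ! 0, ps ! 1}}) edge_adj L c"
        using IH[of "E - {{ps ! 0, ps ! 1}}"] by blast
      with L[OF e] show ?thesis by (intro list_edge_coloring_extend_low_degree[OF sc e True]) auto
    next
      case False
      obtain i j where "2 \<le> i" "i < j" "j < length ps" "{ps ! 0, ps ! i} \<in> E" "{ps ! 0, ps ! j} \<in> E"
        "incident_edges E (ps ! 0) \<subseteq> {{ps ! 0, ps ! 1}, {ps ! 0, ps ! i}, {ps ! 0, ps ! j}}"
        by (rule end_degree_3_chords[OF sc ps maximal False])
      then interpret theta_in_subcubic E ps i j
        using sc ps(1) by unfold_locales
      have "E - theta \<subset> E" using edge_in_E[of 0] ij unfolding theta_def by auto
      then obtain c0 where "proper_list_coloring (E - theta) edge_adj L c0" using IH by blast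
      then show ?thesis using L by (rule list_edge_coloring_extend[rotated])
    qed
  qed
qed

theorem subcubic_list_edge_coloring:
  assumes "subcubic E" and "\<And>e. e \<in> E \<Longrightarrow> finite (L e) \<and> 4 \<le> card (L e)"
  shows "\<exists>c. proper_list_coloring E edge_adj L c"
proof (rule proper_list_coloring_compactness)
  show "finite (L e)" if "e \<in> E" for e using assms(2)[OF that] by blast
  show "\<exists>c. proper_list_coloring F edge_adj L c" if "finite F" "F \<subseteq> E" for F
  proof (rule finite_subcubic_list_edge_coloring[OF \<open>finite F\<close>])
    show "subcubic F" using subcubic_subset[OF assms(1) \<open>F \<subseteq> E\<close>] .
    show "finite (L e) \<and> 4 \<le> card (L e)" if "e \<in> F" for e using assms(2) \<open>F \<subseteq> E\<close> that by blast
  qed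
qed

section \<open>Blocks of edges at a vertex\<close>

lemma exists_maximal_disjoint_pairs:
  obtains M where "disjoint M" "\<And>P. P \<in> M \<Longrightarrow> P \<subseteq> I \<and> card P = 2"
    "\<And>u v. u \<in> I - \<Union>M \<Longrightarrow> v \<in> I - \<Union>M \<Longrightarrow> u = v"
proof -
  define Pairs where "Pairs = {M. disjoint M \<and> (\<forall>P\<in>M. P \<subseteq> I \<and> card P = 2)}"
  have "\<Union>C \<in> Pairs" if "subset.chain Pairs C" for C
  proof -
    have "C \<subseteq> Pairs" "chain\<^sub>\<subseteq> C" using that unfolding subset_chain_def chain_subset_def by auto
    then show ?thesis unfolding Pairs_def by (auto intro: pairwise_chain_Union)
  qed
  then obtain M where "M \<in> Pairs" and M_max: "\<And>N. N \<in> Pairs \<Longrightarrow> M \<subseteq> N \<Longrightarrow> N = M"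
    using subset_Zorn'[of Pairs] by blast
  then have M: "disjoint M" "\<And>P. P \<in> M \<Longrightarrow> P \<subseteq> I \<and> card P = 2"
    unfolding Pairs_def by auto
  have "u = v" if "u \<in> I - \<Union>M" "v \<in> I - \<Union>M" for u v
  proof (rule ccontr)
    assume "u \<noteq> v"
    then have "insert {u, v} M \<in> Pairs"
      using that M unfolding Pairs_def by (auto simp: pairwise_insert disjnt_def)
    moreover have "{u, v} \<notin> M" using that by auto
    ultimately show False using M_max[of "insert {u, v} M"] by blast
  qed
  with M that show thesis by blast
qed

lemma exists_partition_on_card_2_3:
  assumes "card I \<noteq> 1"
  shows "\<exists>B. partition_on I B \<and> (\<forall>P\<in>B. card P = 2 \<or> card P = 3)"
proof -
  obtain M where M_disjoint: "disjoint M" and M_pairs: "\<And>P. P \<in> M \<Longrightarrow> P \<subseteq> I \<and> card P = 2"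
    and rest: "\<And>u v. u \<in> I - \<Union>M \<Longrightarrow> v \<in> I - \<Union>M \<Longrightarrow> u = v"
    using exists_maximal_disjoint_pairs[of I] by blast
  have "{} \<notin> M" "\<Union>M \<subseteq> I" using M_pairs by fastforce+
  show ?thesis
  proof (cases "\<Union>M = I")
    case True
    then show ?thesis using M_disjoint \<open>{} \<notin> M\<close> M_pairs
      by (intro exI[of _ M]) (auto simp: partition_on_def)
  next
    case False
    then obtain u where u: "u \<in> I" "u \<notin> \<Union>M" using \<open>\<Union>M \<subseteq> I\<close> by blast
    then have I_eq: "I = insert u (\<Union>M)" using rest \<open>\<Union>M \<subseteq> I\<close> by blast
    obtain P where "P \<in> M"
    proof (cases "M = {}")
      case True
      then have "I = {u}" using I_eq by simp
      then show ?thesis using assms by simp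
    qed blast
    define B where "B = insert (insert u P) (M - {P})"
    have "partition_on I B"
    proof (rule partition_onI)
      show "\<Union>B = I" using I_eq \<open>P \<in> M\<close> unfolding B_def by blast
      show "{} \<notin> B" using \<open>{} \<notin> M\<close> unfolding B_def by blast
      fix p q assume "p \<in> B" "q \<in> B" "p \<noteq> q"
      then show "disjnt p q"
        using M_disjoint \<open>P \<in> M\<close> u unfolding B_def disjoint_def disjnt_def by blast
    qed
    moreover have "card (insert u P) = 3"
    proof -
      have "card P = 2" "u \<notin> P" using M_pairs[OF \<open>P \<in> M\<close>] u \<open>P \<in> M\<close> by auto
      moreover have "finite P" using \<open>card P = 2\<close> by (intro card_ge_0_finite) simp
      ultimately show ?thesis by simp
    qed
    ultimately show ?thesis using M_pairs unfolding B_def by blast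
  qed
qed

lemma color_class_lepoll_complement:
  assumes B: "partition_on I B" and B_card: "\<And>P. P \<in> B \<Longrightarrow> 2 \<le> card P"
    and B_inj: "\<And>P. P \<in> B \<Longrightarrow> inj_on c P"
  shows "{e \<in> I. c e = \<alpha>} \<lesssim> {e \<in> I. c e \<noteq> \<alpha>}"
proof -
  have "\<forall>e\<in>I. \<exists>P. P \<in> B \<and> e \<in> P" using partition_onD1[OF B] by blast
  then obtain blk where blk: "\<And>e. e \<in> I \<Longrightarrow> blk e \<in> B \<and> e \<in> blk e" by metis
  have blk_unique: "blk e = P" if "e \<in> I" "P \<in> B" "e \<in> P" for e P
    using partition_onD2[OF B] blk[OF \<open>e \<in> I\<close>] that unfolding disjoint_def by blast
  have "\<exists>e'. e' \<in> blk e \<and> e' \<noteq> e" if "e \<in> I" for e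
  proof (rule ccontr)
    assume "\<nexists>e'. e' \<in> blk e \<and> e' \<noteq> e"
    then have "blk e \<subseteq> {e}" by blast
    then have "card (blk e) \<le> 1" using card_mono[of "{e}" "blk e"] by simp
    then show False using B_card blk[OF \<open>e \<in> I\<close>] by fastforce
  qed
  then obtain partner where partner: "\<And>e. e \<in> I \<Longrightarrow> partner e \<in> blk e \<and> partner e \<noteq> e" by metis
  have partner_I: "partner e \<in> I" and blk_partner: "blk (partner e) = blk e" if "e \<in> I" for e
  proof -
    show "partner e \<in> I" using partner[OF that] blk[OF that] partition_onD1[OF B] by blast
    then show "blk (partner e) = blk e" using blk_unique partner[OF that] blk[OF that] by blast
  qed
  have partner_color: "c (partner e) \<noteq> c e" if "e \<in> I" for e
    using B_inj[of "blk e"] blk[OF that] partner[OF that] unfolding inj_on_def by blast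
  show ?thesis
    unfolding lepoll_def
  proof (intro exI[of _ partner] conjI)
    show "inj_on partner {e \<in> I. c e = \<alpha>}"
    proof (rule inj_onI)
      fix e f assume e: "e \<in> {e \<in> I. c e = \<alpha>}" and f: "f \<in> {e \<in> I. c e = \<alpha>}"
        and "partner e = partner f"
      then have "blk e = blk f" using blk_partner by (metis mem_Collect_eq)
      then show "e = f" using B_inj[of "blk e"] blk e f unfolding inj_on_def by auto
    qed
    show "partner ` {e \<in> I. c e = \<alpha>} \<subseteq> {e \<in> I. c e \<noteq> \<alpha>}"
      using partner_I partner_color by auto
  qed
qed

(* The copy of vertex v for its block P is (v, P); an edge becomes the edge joining the copies of
   its ends whose blocks contain it. *)
definition split_edge :: "('a \<Rightarrow> 'a set set set) \<Rightarrow> 'a set \<Rightarrow> ('a \<times> 'a set set) set" where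
  "split_edge B e = {(v, P). v \<in> e \<and> P \<in> B v \<and> e \<in> P}"

context
  fixes E :: "'a set set" and B :: "'a \<Rightarrow> 'a set set set"
  assumes B: "\<And>v. partition_on (incident_edges E v) (B v)"
begin

lemma fst_split_edge: "e \<in> E \<Longrightarrow> fst ` split_edge B e = e"
proof
  show "fst ` split_edge B e \<subseteq> e" unfolding split_edge_def by auto
  show "e \<subseteq> fst ` split_edge B e" if "e \<in> E"
  proof
    fix v assume "v \<in> e"
    then obtain P where "P \<in> B v" "e \<in> P"
      using partition_onD1[OF B, of v] \<open>e \<in> E\<close> unfolding incident_edges_def by blast
    then have "(v, P) \<in> split_edge B e" using \<open>v \<in> e\<close> unfolding split_edge_def by simp
    then show "v \<in> fst ` split_edge B e" by (rule rev_image_eqI) simp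
  qed
qed

lemma inj_on_fst_split_edge: "inj_on fst (split_edge B e)"
proof (rule inj_onI)
  fix x y assume "x \<in> split_edge B e" "y \<in> split_edge B e" "fst x = fst y"
  moreover obtain v P w Q where "x = (v, P)" "y = (w, Q)" by fastforce
  ultimately have "P \<in> B v" "Q \<in> B v" "e \<in> P" "e \<in> Q" "v = w" unfolding split_edge_def by auto
  then show "x = y"
    using partition_onD2[OF B] \<open>x = (v, P)\<close> \<open>y = (w, Q)\<close> unfolding disjoint_def by blast
qed

lemma subcubic_split_edge:
  assumes "\<And>e. e \<in> E \<Longrightarrow> card e = 2" and B_card: "\<And>v P. P \<in> B v \<Longrightarrow> finite P \<and> card P \<le> 3"
  shows "subcubic (split_edge B ` E)"
  unfolding subcubic_def
proof (intro conjI ballI allI)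
  fix e' assume "e' \<in> split_edge B ` E"
  then obtain e where "e \<in> E" "e' = split_edge B e" by blast
  then show "card e' = 2" using card_image[OF inj_on_fst_split_edge, of e] fst_split_edge assms(1) by simp
next
  fix w :: "'a \<times> 'a set set"
  obtain v P where w: "w = (v, P)" by fastforce
  have "finite (incident_edges (split_edge B ` E) w) \<and> card (incident_edges (split_edge B ` E) w) \<le> 3"
  proof (cases "P \<in> B v")
    case True
    have sub: "incident_edges (split_edge B ` E) w \<subseteq> split_edge B ` P"
      unfolding incident_edges_def w split_edge_def by blast
    have fin: "finite (split_edge B ` P)" using B_card[OF True] by simp
    have "card (incident_edges (split_edge B ` E) w) \<le> card (split_edge B ` P)"
      using card_mono[OF fin sub] .
    also have "\<dots> \<le> 3" using B_card[OF True] card_image_le[of P "split_edge B"] by linarith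
    finally show ?thesis using rev_finite_subset[OF fin sub] by simp
  next
    case False
    then have "incident_edges (split_edge B ` E) w = {}"
      unfolding incident_edges_def w split_edge_def by blast
    then show ?thesis by simp
  qed
  then show "finite (incident_edges (split_edge B ` E) w)"
    and "card (incident_edges (split_edge B ` E) w) \<le> 3" by simp_all
qed

lemma list_edge_coloring_inj_on_blocks:
  assumes "\<And>e. e \<in> E \<Longrightarrow> card e = 2" and "\<And>v P. P \<in> B v \<Longrightarrow> finite P \<and> card P \<le> 3"
    and L: "\<And>e. e \<in> E \<Longrightarrow> finite (L e) \<and> 4 \<le> card (L e)"
  shows "\<exists>c. (\<forall>e\<in>E. c e \<in> L e) \<and> (\<forall>v. \<forall>P\<in>B v. inj_on c P)"
proof -
  have "finite (L (fst ` e')) \<and> 4 \<le> card (L (fst ` e'))" if "e' \<in> split_edge B ` E" for e'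
    using that L fst_split_edge by auto
  from subcubic_list_edge_coloring[OF subcubic_split_edge[OF assms(1,2)] this]
  obtain c' where c': "proper_list_coloring (split_edge B ` E) edge_adj (\<lambda>e'. L (fst ` e')) c'" ..
  have "inj_on (c' \<circ> split_edge B) P" if "P \<in> B v" for v P
  proof (rule inj_onI)
    fix e f assume "e \<in> P" "f \<in> P" and same_color: "(c' \<circ> split_edge B) e = (c' \<circ> split_edge B) f"
    then have "e \<in> E" "f \<in> E" "v \<in> e" "v \<in> f"
      using partition_onD1[OF B, of v] \<open>P \<in> B v\<close> unfolding incident_edges_def by auto
    show "e = f"
    proof (rule ccontr)
      assume "e \<noteq> f"
      then have "fst ` split_edge B e \<noteq> fst ` split_edge B f"
        using fst_split_edge[OF \<open>e \<in> E\<close>] fst_split_edge[OF \<open>f \<in> E\<close>] by simp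
      then have "split_edge B e \<noteq> split_edge B f" by blast
      moreover have "(v, P) \<in> split_edge B e \<inter> split_edge B f"
        using \<open>e \<in> P\<close> \<open>f \<in> P\<close> \<open>v \<in> e\<close> \<open>v \<in> f\<close> \<open>P \<in> B v\<close> unfolding split_edge_def by blast
      ultimately have "edge_adj (split_edge B e) (split_edge B f)" unfolding edge_adj_def by blast
      then show False
        using c' same_color \<open>e \<in> E\<close> \<open>f \<in> E\<close> unfolding proper_list_coloring_def by auto
    qed
  qed
  moreover have "(c' \<circ> split_edge B) e \<in> L e" if "e \<in> E" for e
    using c' that fst_split_edge[OF that] unfolding proper_list_coloring_def by auto
  ultimately show ?thesis by blast
qed

end

lemma card_incident_edges_ne_1:
  assumes "\<forall>e\<in>E. \<not> pendant_edge E e"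
  shows "card (incident_edges E v) \<noteq> 1"
proof
  assume "card (incident_edges E v) = 1"
  then obtain e where e: "incident_edges E v = {e}" by (rule card_1_singletonE)
  then have "degree_one E v" unfolding degree_one_def by auto
  moreover have "e \<in> E" "v \<in> e" using e unfolding incident_edges_def by auto
  ultimately show False using assms unfolding pendant_edge_def by blast
qed

lemma graph_card_edge: "graph V E \<Longrightarrow> e \<in> E \<Longrightarrow> card e = 2"
  unfolding graph_def by auto

theorem mainTheorem6:
  fixes V :: "'a set" and E :: "'a set set" and L :: "'a set \<Rightarrow> 'c set"
  assumes "graph V E"
    and "\<forall>e\<in>E. \<not> pendant_edge E e"
    and "\<forall>e\<in>E. finite (L e) \<and> card (L e) = 4"
  shows "\<exists>c. list_coloring E L c \<and> majority_coloring V E c"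
proof -
  have "\<forall>v. \<exists>B. partition_on (incident_edges E v) B \<and> (\<forall>P\<in>B. card P = 2 \<or> card P = 3)"
    by (intro allI exists_partition_on_card_2_3 card_incident_edges_ne_1[OF assms(2)])
  from choice[OF this] obtain B where B: "\<forall>v. partition_on (incident_edges E v) (B v) \<and>
      (\<forall>P\<in>B v. card P = 2 \<or> card P = 3)" ..
  then have blocks: "\<And>v. partition_on (incident_edges E v) (B v)" by simp
  have block_size: "2 \<le> card P \<and> card P \<le> 3 \<and> finite P" if "P \<in> B v" for v P
    using B that card.infinite[of P] by fastforce
  have "\<exists>c. (\<forall>e\<in>E. c e \<in> L e) \<and> (\<forall>v. \<forall>P\<in>B v. inj_on c P)"
    by (rule list_edge_coloring_inj_on_blocks[OF blocks graph_card_edge[OF assms(1)]])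
      (use block_size assms(3) in auto)
  then obtain c where c: "\<forall>e\<in>E. c e \<in> L e" and c_inj: "\<forall>v. \<forall>P\<in>B v. inj_on c P"
    by blast
  have "majority_coloring V E c"
    unfolding majority_coloring_def
  proof (intro ballI allI)
    fix v \<alpha>
    show "{e \<in> incident_edges E v. c e = \<alpha>} \<lesssim> {e \<in> incident_edges E v. c e \<noteq> \<alpha>}"
      by (rule color_class_lepoll_complement[OF blocks]) (use block_size c_inj in auto)
  qed
  then show ?thesis using c unfolding list_coloring_def by blast
qed

end
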